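(* Let $\Lambda$ be any lattice in $\mathbb{E}^3$ whose shortest non-zero vector has length $2$. Then for every $n\ge 1$, $C_\Lambda(n)\le C_{fcc}(n)$. More precisely, there is a map $f:\Lambda\to\Lambda_{fcc}$ of the form $f(\alpha\mathbf{v}_1+\beta\mathbf{v}_2+\gamma\mathbf{v}_3)=\alpha\mathbf{w}_1+\beta\mathbf{w}_2+\gamma\mathbf{w}_3$ ($\alpha,\beta,\gamma\in\mathbb{Z}$), for suitable integral bases $\mathbf{v}_1,\mathbf{v}_2,\mathbf{v}_3$ of $\Lambda$ and $\mathbf{w}_1,\mathbf{w}_2,\mathbf{w}_3$ of $\Lambda_{fcc}$, such that $\mathrm{dist}(\mathbf{x},\mathbf{y})=2$ implies $\mathrm{dist}(f(\mathbf{x}),f(\mathbf{y}))=2$ for all $\mathbf{x},\mathbf{y}\in\Lambda$.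
   Context: A lattice in $\mathbb{E}^3$ is the set of integer linear combinations of three linearly independent vectors. $\Lambda_{fcc}$ is the face-centered cubic lattice with shortest non-zero vector of length $2$. For a lattice $L$, $C_L(n)$ is the largest number of touching pairs (centers at distance $2$) among packings of $n$ unit balls (pairwise disjoint interiors) with all centers in $L$; $C_{fcc}(n):=C_{\Lambda_{fcc}}(n)$. *)

theory Defs
  imports "HOL-Analysis.Analysis"
begin

definition lin_indep3 :: "real^3 \<Rightarrow> real^3 \<Rightarrow> real^3 \<Rightarrow> bool" where
  "lin_indep3 v1 v2 v3 \<longleftrightarrow>
     (\<forall>a b c :: real. a *\<^sub>R v1 + b *\<^sub>R v2 + c *\<^sub>R v3 = 0 \<longrightarrow> a = 0 \<and> b = 0 \<and> c = 0)"

definition int_span3 :: "real^3 \<Rightarrow> real^3 \<Rightarrow> real^3 \<Rightarrow> (real^3) set" where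
  "int_span3 v1 v2 v3 =
     {of_int a *\<^sub>R v1 + of_int b *\<^sub>R v2 + of_int c *\<^sub>R v3 | a b c :: int. True}"

definition is_basis3 :: "(real^3) set \<Rightarrow> real^3 \<Rightarrow> real^3 \<Rightarrow> real^3 \<Rightarrow> bool" where
  "is_basis3 L v1 v2 v3 \<longleftrightarrow> lin_indep3 v1 v2 v3 \<and> L = int_span3 v1 v2 v3"

definition is_lattice3 :: "(real^3) set \<Rightarrow> bool" where
  "is_lattice3 L \<longleftrightarrow> (\<exists>v1 v2 v3. is_basis3 L v1 v2 v3)"

definition min_norm :: "(real^3) set \<Rightarrow> real \<Rightarrow> bool" where
  "min_norm L d \<longleftrightarrow> (\<forall>x\<in>L. x \<noteq> 0 \<longrightarrow> norm x \<ge> d) \<and> (\<exists>x\<in>L. x \<noteq> 0 \<and> norm x = d)"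

text \<open>Face-centred cubic lattice with minimal distance 2:
  sqrt 2 times the integer points with even coordinate sum.\<close>
definition fcc :: "(real^3) set" where
  "fcc = {vector [sqrt 2 * of_int a, sqrt 2 * of_int b, sqrt 2 * of_int c] | a b c :: int.
            even (a + b + c)}"

definition unit_packing :: "(real^3) set \<Rightarrow> bool" where
  "unit_packing P \<longleftrightarrow> (\<forall>x\<in>P. \<forall>y\<in>P. x \<noteq> y \<longrightarrow> interior (cball x 1) \<inter> interior (cball y 1) = {})"

definition touching :: "(real^3) set \<Rightarrow> nat" where
  "touching P = card {{x, y} | x y. x \<in> P \<and> y \<in> P \<and> dist x y = 2}"

definition C_lat :: "(real^3) set \<Rightarrow> nat \<Rightarrow> nat" where
  "C_lat L n = Max {touching P | P. P \<subseteq> L \<and> finite P \<and> card P = n \<and> unit_packing P}"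

definition C_fcc :: "nat \<Rightarrow> nat" where
  "C_fcc n = C_lat fcc n"

end

theory Submission
  imports Defs
begin

(* Let L be a lattice with minimal norm 2.  Among all bases (v1, v2, v3) of L choose one
   minimising Selling's energy |v1|^2 + |v2|^2 + |v3|^2 + |v1 + v2 + v3|^2.  Such a basis
   is Selling reduced: with v0 = -(v1 + v2 + v3) all inner products vi . vj (i ~= j) of the
   superbase v0, ..., v3 are nonpositive.  Selling's identity writes the inner product of
   two lattice vectors as a positive combination of products of coordinate differences;
   from it we deduce that a minimal vector a v1 + b v2 + c v3 has its superbase coordinates
   (0, a, b, c) within a range of width 1, i.e. (a, b, c) lies in {0,1}^3 or {0,-1}^3.
   After reordering, v2 + v3 is not minimal.  The integral map sending vi to the fcc basis
   vectors fcc_bi is injective and sends every one of these remaining candidates to a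
   minimal fcc vector, so it preserves contacts.  An injective contact-preserving map into
   the 2-separated set fcc maps any packing of L to a packing of fcc with at least as many
   touching pairs, which gives C_L(n) <= C_fcc(n). *)

section \<open>Integer spans\<close>

lemma int_span3_memI:
  "x = of_int a *\<^sub>R v1 + of_int b *\<^sub>R v2 + of_int c *\<^sub>R v3 \<Longrightarrow> x \<in> int_span3 v1 v2 v3"
  unfolding int_span3_def by blast

lemma int_span3_E:
  assumes "x \<in> int_span3 v1 v2 v3"
  obtains a b c :: int where "x = of_int a *\<^sub>R v1 + of_int b *\<^sub>R v2 + of_int c *\<^sub>R v3"
  using assms unfolding int_span3_def by blast

lemma int_span3_generators:
  "v1 \<in> int_span3 v1 v2 v3" "v2 \<in> int_span3 v1 v2 v3" "v3 \<in> int_span3 v1 v2 v3"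
proof -
  show "v1 \<in> int_span3 v1 v2 v3" by (rule int_span3_memI[where a = 1 and b = 0 and c = 0]) simp
  show "v2 \<in> int_span3 v1 v2 v3" by (rule int_span3_memI[where a = 0 and b = 1 and c = 0]) simp
  show "v3 \<in> int_span3 v1 v2 v3" by (rule int_span3_memI[where a = 0 and b = 0 and c = 1]) simp
qed

lemma int_span3_comb:
  assumes "x \<in> int_span3 v1 v2 v3" "y \<in> int_span3 v1 v2 v3" "z \<in> int_span3 v1 v2 v3"
  shows "of_int p *\<^sub>R x + of_int q *\<^sub>R y + of_int r *\<^sub>R z \<in> int_span3 v1 v2 v3"
proof -
  obtain a1 b1 c1 where x: "x = of_int a1 *\<^sub>R v1 + of_int b1 *\<^sub>R v2 + of_int c1 *\<^sub>R v3"
    using assms(1) by (rule int_span3_E)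
  obtain a2 b2 c2 where y: "y = of_int a2 *\<^sub>R v1 + of_int b2 *\<^sub>R v2 + of_int c2 *\<^sub>R v3"
    using assms(2) by (rule int_span3_E)
  obtain a3 b3 c3 where z: "z = of_int a3 *\<^sub>R v1 + of_int b3 *\<^sub>R v2 + of_int c3 *\<^sub>R v3"
    using assms(3) by (rule int_span3_E)
  show ?thesis
    by (rule int_span3_memI[where a = "p*a1 + q*a2 + r*a3" and b = "p*b1 + q*b2 + r*b3"
          and c = "p*c1 + q*c2 + r*c3"])
       (simp add: x y z algebra_simps)
qed

lemma int_span3_diff:
  assumes "x \<in> int_span3 v1 v2 v3" "y \<in> int_span3 v1 v2 v3"
  shows "x - y \<in> int_span3 v1 v2 v3"
  using int_span3_comb[OF assms assms(1), of 1 "-1" 0] by simp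

lemma int_span3_nat_scale:
  assumes "x \<in> int_span3 v1 v2 v3"
  shows "of_nat k *\<^sub>R x \<in> int_span3 v1 v2 v3"
  using int_span3_comb[OF assms assms assms, of "int k" 0 0] by simp

lemma int_span3_subset:
  assumes "u1 \<in> int_span3 v1 v2 v3" "u2 \<in> int_span3 v1 v2 v3" "u3 \<in> int_span3 v1 v2 v3"
  shows "int_span3 u1 u2 u3 \<subseteq> int_span3 v1 v2 v3"
  by (auto elim!: int_span3_E intro: int_span3_comb[OF assms])

section \<open>Coordinates and changes of basis\<close>

definition coord_map :: "real^3 \<Rightarrow> real^3 \<Rightarrow> real^3 \<Rightarrow> real^3 \<Rightarrow> real^3" where
  "coord_map v1 v2 v3 y = y$1 *\<^sub>R v1 + y$2 *\<^sub>R v2 + y$3 *\<^sub>R v3"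

lemma linear_coord_map: "linear (coord_map v1 v2 v3)"
  by (rule linearI) (simp_all add: coord_map_def algebra_simps)

lemma coord_map_vector:
  "coord_map v1 v2 v3 (vector [a, b, c]) = a *\<^sub>R v1 + b *\<^sub>R v2 + c *\<^sub>R v3"
  by (simp add: coord_map_def)

lemma int_span3_in_range: "int_span3 v1 v2 v3 \<subseteq> range (coord_map v1 v2 v3)"
proof
  fix x assume "x \<in> int_span3 v1 v2 v3"
  then obtain a b c :: int where "x = of_int a *\<^sub>R v1 + of_int b *\<^sub>R v2 + of_int c *\<^sub>R v3"
    by (rule int_span3_E)
  then have "x = coord_map v1 v2 v3 (vector [of_int a, of_int b, of_int c])"
    by (simp add: coord_map_vector)
  then show "x \<in> range (coord_map v1 v2 v3)" by blast
qed

lemma lin_indep3_iff_inj: "lin_indep3 v1 v2 v3 \<longleftrightarrow> inj (coord_map v1 v2 v3)"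
proof
  assume indep: "lin_indep3 v1 v2 v3"
  show "inj (coord_map v1 v2 v3)"
  proof (rule linear_inj_on_iff_eq_0[THEN iffD2, OF linear_coord_map subspace_UNIV], intro ballI impI)
    fix x assume "coord_map v1 v2 v3 x = 0"
    then have "x$1 = 0 \<and> x$2 = 0 \<and> x$3 = 0"
      using indep unfolding lin_indep3_def coord_map_def by blast
    then show "x = 0" by (simp add: vec_eq_iff forall_3)
  qed
next
  assume inj: "inj (coord_map v1 v2 v3)"
  show "lin_indep3 v1 v2 v3" unfolding lin_indep3_def
  proof (intro allI impI)
    fix a b c :: real assume "a *\<^sub>R v1 + b *\<^sub>R v2 + c *\<^sub>R v3 = 0"
    then have "coord_map v1 v2 v3 (vector [a, b, c]) = coord_map v1 v2 v3 0"
      by (simp add: coord_map_vector linear_0[OF linear_coord_map])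
    then have "(vector [a, b, c] :: real^3) = 0" by (rule injD[OF inj])
    then show "a = 0 \<and> b = 0 \<and> c = 0" by (simp add: vec_eq_iff forall_3)
  qed
qed

(* Dimension argument: if three independent vectors are real combinations of u1, u2, u3,
   then u1, u2, u3 span the whole space and are therefore independent. *)
lemma lin_indep3_if_spanned:
  assumes indep: "lin_indep3 v1 v2 v3" and spanned: "{v1, v2, v3} \<subseteq> range (coord_map u1 u2 u3)"
  shows "lin_indep3 u1 u2 u3"
proof -
  let ?U = "range (coord_map u1 u2 u3)"
  have sub: "subspace ?U" by (rule linear_subspace_image[OF linear_coord_map subspace_UNIV])
  have surj_v: "surj (coord_map v1 v2 v3)"
    using indep linear_inj_imp_surj[OF linear_coord_map] by (simp add: lin_indep3_iff_inj)
  have in_U: "coord_map v1 v2 v3 y \<in> ?U" for y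
    unfolding coord_map_def[of v1 v2 v3]
    using spanned by (intro subspace_add[OF sub] subspace_scale[OF sub]) auto
  have "x \<in> ?U" for x
  proof -
    obtain y where "x = coord_map v1 v2 v3 y" using surj_v by (metis surjD)
    then show ?thesis using in_U by simp
  qed
  then have "surj (coord_map u1 u2 u3)" by blast
  then show ?thesis
    by (simp add: lin_indep3_iff_inj linear_surj_imp_inj[OF linear_coord_map])
qed

lemma basis_change:
  assumes basis: "is_basis3 L v1 v2 v3"
    and new_in: "u1 \<in> L" "u2 \<in> L" "u3 \<in> L"
    and old_in: "v1 \<in> int_span3 u1 u2 u3" "v2 \<in> int_span3 u1 u2 u3" "v3 \<in> int_span3 u1 u2 u3"
  shows "is_basis3 L u1 u2 u3"
proof -
  have L: "L = int_span3 v1 v2 v3" and indep: "lin_indep3 v1 v2 v3"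
    using basis unfolding is_basis3_def by auto
  have "L = int_span3 u1 u2 u3"
    using int_span3_subset[OF old_in] int_span3_subset[OF new_in[unfolded L]] L by blast
  moreover have "lin_indep3 u1 u2 u3"
    using lin_indep3_if_spanned[OF indep] old_in int_span3_in_range by blast
  ultimately show ?thesis unfolding is_basis3_def by blast
qed

lemma basis_mem:
  assumes "is_basis3 L v1 v2 v3" "x = of_int a *\<^sub>R v1 + of_int b *\<^sub>R v2 + of_int c *\<^sub>R v3"
  shows "x \<in> L"
  using assms int_span3_memI unfolding is_basis3_def by blast

lemma basis_swap12: "is_basis3 L v1 v2 v3 \<Longrightarrow> is_basis3 L v2 v1 v3"
  by (rule basis_change) (auto intro: basis_mem[where a=0 and b=1 and c=0]
      basis_mem[where a=1 and b=0 and c=0] basis_mem[where a=0 and b=0 and c=1] int_span3_generators)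

lemma basis_swap23: "is_basis3 L v1 v2 v3 \<Longrightarrow> is_basis3 L v1 v3 v2"
  by (rule basis_change) (auto intro: basis_mem[where a=0 and b=1 and c=0]
      basis_mem[where a=1 and b=0 and c=0] basis_mem[where a=0 and b=0 and c=1] int_span3_generators)

lemma basis_replace_first: "is_basis3 L v1 v2 v3 \<Longrightarrow> is_basis3 L (- (v1 + v2 + v3)) v2 v3"
  by (rule basis_change)
     (auto intro: basis_mem[where a="-1" and b="-1" and c="-1"] basis_mem[where a=0 and b=1 and c=0]
      basis_mem[where a=0 and b=0 and c=1] int_span3_generators
      int_span3_memI[where a="-1" and b="-1" and c="-1"])

lemma basis_selling_step: "is_basis3 L v1 v2 v3 \<Longrightarrow> is_basis3 L (- v1) v2 (v3 + v1)"
  by (rule basis_change)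
     (auto intro: basis_mem[where a="-1" and b=0 and c=0] basis_mem[where a=0 and b=1 and c=0]
      basis_mem[where a=1 and b=0 and c=1] int_span3_generators
      int_span3_memI[where a="-1" and b=0 and c=0] int_span3_memI[where a=1 and b=0 and c=1])

section \<open>Selling reduction\<close>

(* A lattice has only finitely many vectors in any ball, because the coordinates of a vector
   are bounded by a multiple of its norm (the inverse coordinate map is bounded). *)
lemma finite_short_vectors:
  assumes "is_basis3 L v1 v2 v3"
  shows "finite {x \<in> L. norm x \<le> R}"
proof -
  have L: "L = int_span3 v1 v2 v3" and inj: "inj (coord_map v1 v2 v3)"
    using assms by (auto simp: is_basis3_def lin_indep3_iff_inj)
  obtain B where B: "B > 0" "\<And>x. norm (inv (coord_map v1 v2 v3) x) \<le> B * norm x"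
    using linear_bounded_pos[OF inj_linear_imp_inv_linear[OF linear_coord_map inj]] by blast
  define N where "N = \<lceil>B * R\<rceil>"
  have coeff_bound: "\<bar>t\<bar> \<le> N" if "\<bar>real_of_int t\<bar> \<le> B * R" for t :: int
    using that le_of_int_ceiling[of "B * R"] unfolding N_def by linarith
  define comb where "comb = (\<lambda>(a, b, c). of_int a *\<^sub>R v1 + of_int b *\<^sub>R v2 + of_int c *\<^sub>R v3)"
  have "{x \<in> L. norm x \<le> R} \<subseteq> comb ` ({-N..N} \<times> {-N..N} \<times> {-N..N})"
  proof
    fix x assume "x \<in> {x \<in> L. norm x \<le> R}"
    then have xL: "x \<in> int_span3 v1 v2 v3" and short: "norm x \<le> R" using L by auto
    obtain a b c where x: "x = of_int a *\<^sub>R v1 + of_int b *\<^sub>R v2 + of_int c *\<^sub>R v3"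
      using xL by (rule int_span3_E)
    let ?y = "vector [of_int a, of_int b, of_int c] :: real^3"
    have "inv (coord_map v1 v2 v3) x = ?y"
      unfolding x coord_map_vector[symmetric] using inj by simp
    then have "norm ?y \<le> B * R"
      using B(2)[of x] mult_left_mono[OF short less_imp_le[OF B(1)]] by simp
    then have "\<bar>?y $ i\<bar> \<le> B * R" for i
      using component_le_norm_cart[of ?y i] by linarith
    from this[of 1] this[of 2] this[of 3] have "\<bar>a\<bar> \<le> N" "\<bar>b\<bar> \<le> N" "\<bar>c\<bar> \<le> N"
      by (auto intro: coeff_bound)
    then show "x \<in> comb ` ({-N..N} \<times> {-N..N} \<times> {-N..N})"
      unfolding x comb_def by (intro image_eqI[where x = "(a, b, c)"]) auto
  qed
  then show ?thesis by (rule finite_subset) simp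
qed

(* Selling's energy of the superbase v0, v1, v2, v3 with v0 = -(v1 + v2 + v3). *)
definition superbase_energy :: "real^3 \<Rightarrow> real^3 \<Rightarrow> real^3 \<Rightarrow> real" where
  "superbase_energy v1 v2 v3 = (norm v1)\<^sup>2 + (norm v2)\<^sup>2 + (norm v3)\<^sup>2 + (norm (v1 + v2 + v3))\<^sup>2"

definition selling_reduced :: "(real^3) set \<Rightarrow> real^3 \<Rightarrow> real^3 \<Rightarrow> real^3 \<Rightarrow> bool" where
  "selling_reduced L v1 v2 v3 \<longleftrightarrow> is_basis3 L v1 v2 v3 \<and>
     (\<forall>u1 u2 u3. is_basis3 L u1 u2 u3 \<longrightarrow> superbase_energy v1 v2 v3 \<le> superbase_energy u1 u2 u3)"

(* Minimal bases exist: only finitely many bases have energy below that of a given one. *)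
lemma selling_reduced_exists:
  assumes "is_lattice3 L"
  obtains v1 v2 v3 where "selling_reduced L v1 v2 v3"
proof -
  obtain b1 b2 b3 where b: "is_basis3 L b1 b2 b3" using assms unfolding is_lattice3_def by blast
  define R where "R = superbase_energy b1 b2 b3"
  define T where "T = {x \<in> L. norm x \<le> sqrt R}"
  define Bs where "Bs = {(u1, u2, u3). is_basis3 L u1 u2 u3 \<and> superbase_energy u1 u2 u3 \<le> R}"
  have "Bs \<subseteq> T \<times> T \<times> T"
  proof
    fix u assume "u \<in> Bs"
    then obtain u1 u2 u3 where u: "u = (u1, u2, u3)" "is_basis3 L u1 u2 u3"
      "superbase_energy u1 u2 u3 \<le> R" unfolding Bs_def by auto
    have "u1 \<in> L" "u2 \<in> L" "u3 \<in> L"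
      using u(2) int_span3_generators unfolding is_basis3_def by auto
    moreover have "(norm u1)\<^sup>2 \<le> R" "(norm u2)\<^sup>2 \<le> R" "(norm u3)\<^sup>2 \<le> R"
      using u(3) zero_le_power2[of "norm (u1 + u2 + u3)"] zero_le_power2[of "norm u1"]
        zero_le_power2[of "norm u2"] zero_le_power2[of "norm u3"]
      unfolding superbase_energy_def by linarith+
    ultimately show "u \<in> T \<times> T \<times> T" unfolding T_def u(1) by (auto simp: real_le_rsqrt)
  qed
  then have "finite Bs" using finite_short_vectors[OF b] finite_subset unfolding T_def by blast
  moreover have "(b1, b2, b3) \<in> Bs" unfolding Bs_def R_def using b by simp
  ultimately obtain v where v: "is_arg_min (\<lambda>(u1, u2, u3). superbase_energy u1 u2 u3) (\<lambda>u. u \<in> Bs) v"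
    using ex_is_arg_min_if_finite by blast
  obtain v1 v2 v3 where v_eq: "v = (v1, v2, v3)" by (cases v)
  have "superbase_energy v1 v2 v3 \<le> superbase_energy u1 u2 u3" if "is_basis3 L u1 u2 u3" for u1 u2 u3
  proof (cases "superbase_energy u1 u2 u3 \<le> R")
    case True
    then have "(u1, u2, u3) \<in> Bs" unfolding Bs_def using that by simp
    then show ?thesis using v unfolding v_eq is_arg_min_def by force
  next
    case False
    then show ?thesis using v unfolding v_eq is_arg_min_def Bs_def by auto
  qed
  moreover have "is_basis3 L v1 v2 v3" using v unfolding v_eq is_arg_min_def Bs_def by auto
  ultimately show ?thesis using that unfolding selling_reduced_def by blast
qed

lemma superbase_energy_selling_step:
  "superbase_energy (- a) b (c + a) = superbase_energy a b c - 2 * (a \<bullet> b)"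
proof -
  have "- a + b + (c + a) = b + c" by (simp add: algebra_simps)
  then show ?thesis unfolding superbase_energy_def power2_norm_eq_inner
    by (simp add: inner_add_left inner_add_right inner_commute algebra_simps)
qed

lemma superbase_energy_swap12: "superbase_energy v2 v1 v3 = superbase_energy v1 v2 v3"
  unfolding superbase_energy_def by (simp add: algebra_simps)

lemma superbase_energy_swap23: "superbase_energy v1 v3 v2 = superbase_energy v1 v2 v3"
  unfolding superbase_energy_def by (simp add: algebra_simps)

lemma superbase_energy_replace_first:
  "superbase_energy (- (v1 + v2 + v3)) v2 v3 = superbase_energy v1 v2 v3"
proof -
  have sum: "- (v1 + v2 + v3) + v2 + v3 = - v1" by (simp add: algebra_simps)
  show ?thesis unfolding superbase_energy_def sum norm_minus_cancel by simp
qed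

(* All six inner products vi . vj (i ~= j) of the superbase v0, ..., v3 are nonpositive;
   the conditions on v0 are written as (v1 + v2 + v3) . vi >= 0. *)
definition obtuse_superbase :: "real^3 \<Rightarrow> real^3 \<Rightarrow> real^3 \<Rightarrow> bool" where
  "obtuse_superbase v1 v2 v3 \<longleftrightarrow>
     v1 \<bullet> v2 \<le> 0 \<and> v1 \<bullet> v3 \<le> 0 \<and> v2 \<bullet> v3 \<le> 0 \<and>
     0 \<le> (v1 + v2 + v3) \<bullet> v1 \<and> 0 \<le> (v1 + v2 + v3) \<bullet> v2 \<and> 0 \<le> (v1 + v2 + v3) \<bullet> v3"

(* Minimality forbids an acute pair: otherwise the reduction step would lower the energy. *)
lemma selling_reduced_pair_obtuse:
  assumes "selling_reduced L v1 v2 v3" "is_basis3 L a b c"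
    "superbase_energy a b c = superbase_energy v1 v2 v3"
  shows "a \<bullet> b \<le> 0"
  using assms basis_selling_step[OF assms(2)] superbase_energy_selling_step[of a b c]
  unfolding selling_reduced_def by fastforce

lemma selling_reduced_obtuse:
  assumes red: "selling_reduced L v1 v2 v3"
  shows "obtuse_superbase v1 v2 v3"
proof -
  have b: "is_basis3 L v1 v2 v3" using red unfolding selling_reduced_def by blast
  note pair = selling_reduced_pair_obtuse[OF red]
  have b0: "is_basis3 L (- (v1 + v2 + v3)) v2 v3" by (rule basis_replace_first[OF b])
  have b0': "is_basis3 L (- (v2 + v1 + v3)) v1 v3" by (rule basis_replace_first[OF basis_swap12[OF b]])
  have "v1 \<bullet> v2 \<le> 0" using pair[OF b] by simp
  moreover have "v1 \<bullet> v3 \<le> 0"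
    using pair[OF basis_swap23[OF b]] superbase_energy_swap23 by simp
  moreover have "v2 \<bullet> v3 \<le> 0"
    using pair[OF basis_swap23[OF basis_swap12[OF b]]] superbase_energy_swap23 superbase_energy_swap12
    by metis
  moreover have "- (v2 + v1 + v3) \<bullet> v1 \<le> 0"
    using pair[OF b0'] superbase_energy_replace_first superbase_energy_swap12 by metis
  moreover have "- (v1 + v2 + v3) \<bullet> v2 \<le> 0"
    using pair[OF b0] superbase_energy_replace_first by metis
  moreover have "- (v1 + v2 + v3) \<bullet> v3 \<le> 0"
    using pair[OF basis_swap23[OF b0]] superbase_energy_replace_first superbase_energy_swap23 by metis
  ultimately show ?thesis
    by (simp add: obtuse_superbase_def inner_diff_left inner_diff_right inner_add_left
        inner_add_right inner_commute)
qed

section \<open>Minimal vectors of an obtuse superbase\<close>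

(* Selling's identity: for vectors with superbase coordinates (b0, ..., b3) and (c0, ..., c3)
   the inner product is  sum over i < j of -(vi . vj) (bi - bj) (ci - cj). *)
lemma selling_identity:
  fixes v1 v2 v3 :: "real^3"
  shows "((b1 - b0) *\<^sub>R v1 + (b2 - b0) *\<^sub>R v2 + (b3 - b0) *\<^sub>R v3) \<bullet>
           ((c1 - c0) *\<^sub>R v1 + (c2 - c0) *\<^sub>R v2 + (c3 - c0) *\<^sub>R v3)
       = ((v1 + v2 + v3) \<bullet> v1) * ((b0 - b1) * (c0 - c1)) + ((v1 + v2 + v3) \<bullet> v2) * ((b0 - b2) * (c0 - c2))
       + ((v1 + v2 + v3) \<bullet> v3) * ((b0 - b3) * (c0 - c3))
       - (v1 \<bullet> v2) * ((b1 - b2) * (c1 - c2)) - (v1 \<bullet> v3) * ((b1 - b3) * (c1 - c3))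
       - (v2 \<bullet> v3) * ((b2 - b3) * (c2 - c3))"
  by (simp add: inner_add_left inner_add_right inner_commute algebra_simps)

lemma obtuse_comonotone_inner_nonneg:
  fixes b0 b1 b2 b3 c0 c1 c2 c3 :: real
  assumes "obtuse_superbase v1 v2 v3"
    and "0 \<le> (b0 - b1) * (c0 - c1)" "0 \<le> (b0 - b2) * (c0 - c2)" "0 \<le> (b0 - b3) * (c0 - c3)"
    and "0 \<le> (b1 - b2) * (c1 - c2)" "0 \<le> (b1 - b3) * (c1 - c3)" "0 \<le> (b2 - b3) * (c2 - c3)"
  shows "0 \<le> ((b1 - b0) *\<^sub>R v1 + (b2 - b0) *\<^sub>R v2 + (b3 - b0) *\<^sub>R v3) \<bullet>
              ((c1 - c0) *\<^sub>R v1 + (c2 - c0) *\<^sub>R v2 + (c3 - c0) *\<^sub>R v3)"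
proof -
  have obt: "v1 \<bullet> v2 \<le> 0" "v1 \<bullet> v3 \<le> 0" "v2 \<bullet> v3 \<le> 0"
    "0 \<le> (v1 + v2 + v3) \<bullet> v1" "0 \<le> (v1 + v2 + v3) \<bullet> v2" "0 \<le> (v1 + v2 + v3) \<bullet> v3"
    using assms(1) unfolding obtuse_superbase_def by auto
  show ?thesis unfolding selling_identity
    using mult_nonneg_nonneg[OF obt(4) assms(2)] mult_nonneg_nonneg[OF obt(5) assms(3)]
      mult_nonneg_nonneg[OF obt(6) assms(4)] mult_nonpos_nonneg[OF obt(1) assms(5)]
      mult_nonpos_nonneg[OF obt(2) assms(6)] mult_nonpos_nonneg[OF obt(3) assms(7)]
    by linarith
qed

lemma basis_comb_norm_ge:
  assumes basis: "is_basis3 L v1 v2 v3" and mn: "min_norm L 2"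
    and nonzero: "\<not> (a = 0 \<and> b = 0 \<and> c = (0::int))"
  shows "2 \<le> norm (of_int a *\<^sub>R v1 + of_int b *\<^sub>R v2 + of_int c *\<^sub>R v3)"
proof -
  have "of_int a *\<^sub>R v1 + of_int b *\<^sub>R v2 + of_int c *\<^sub>R v3 \<in> L" by (rule basis_mem[OF basis refl])
  moreover have "of_int a *\<^sub>R v1 + of_int b *\<^sub>R v2 + of_int c *\<^sub>R v3 \<noteq> 0"
  proof
    assume "of_int a *\<^sub>R v1 + of_int b *\<^sub>R v2 + of_int c *\<^sub>R v3 = 0"
    then have "real_of_int a = 0 \<and> real_of_int b = 0 \<and> real_of_int c = 0"
      using basis unfolding is_basis3_def lin_indep3_def by blast
    then show False using nonzero by simp
  qed
  ultimately show ?thesis using mn unfolding min_norm_def by blast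
qed

lemma top_indicator_comonotone:
  fixes x y M :: int
  assumes "x \<le> M" "y \<le> M" and ind: "ind = (\<lambda>t. if t = M then 1 else 0 :: int)"
  shows "0 \<le> (real_of_int (ind x) - real_of_int (ind y)) *
              ((real_of_int x - real_of_int (ind x)) - (real_of_int y - real_of_int (ind y)))"
  using assms by auto

(* Key lemma: the superbase coordinates (0, a, b, c) of a minimal vector span a range of
   width at most 1.  Otherwise the split above writes it as y + z with y, z nonzero lattice
   vectors and y . z >= 0, whence its squared norm is at least 8. *)
lemma minimal_vector_spread:
  assumes basis: "is_basis3 L v1 v2 v3" and mn: "min_norm L 2" and obt: "obtuse_superbase v1 v2 v3"
    and minimal: "norm (of_int a *\<^sub>R v1 + of_int b *\<^sub>R v2 + of_int c *\<^sub>R v3) = 2"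
  shows "max 0 (max a (max b c)) - min 0 (min a (min b c)) \<le> 1"
proof (rule ccontr)
  define M where "M = max 0 (max a (max b c))"
  define ind where "ind = (\<lambda>t. if t = M then 1 else 0 :: int)"
  assume "\<not> ?thesis"
  then have spread: "2 \<le> M - min 0 (min a (min b c))" unfolding M_def by simp
  define y where "y = of_int (ind a - ind 0) *\<^sub>R v1 + of_int (ind b - ind 0) *\<^sub>R v2
                     + of_int (ind c - ind 0) *\<^sub>R v3"
  define z where "z = of_int ((a - ind a) - (0 - ind 0)) *\<^sub>R v1 + of_int ((b - ind b) - (0 - ind 0)) *\<^sub>R v2
                     + of_int ((c - ind c) - (0 - ind 0)) *\<^sub>R v3"
  have split: "of_int a *\<^sub>R v1 + of_int b *\<^sub>R v2 + of_int c *\<^sub>R v3 = y + z"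
    unfolding y_def z_def by (simp add: algebra_simps)
  have "\<not> (ind a - ind 0 = 0 \<and> ind b - ind 0 = 0 \<and> ind c - ind 0 = 0)"
    "\<not> ((a - ind a) - (0 - ind 0) = 0 \<and> (b - ind b) - (0 - ind 0) = 0 \<and> (c - ind c) - (0 - ind 0) = 0)"
    using spread unfolding M_def ind_def by (auto simp: max_def min_def split: if_splits)
  then have "2 \<le> norm y" "2 \<le> norm z"
    unfolding y_def z_def by (blast intro: basis_comb_norm_ge[OF basis mn])+
  then have "4 \<le> (norm y)\<^sup>2" "4 \<le> (norm z)\<^sup>2"
    using power_mono[of 2 "norm y" 2] power_mono[of 2 "norm z" 2] by simp_all
  moreover have "0 \<le> y \<bullet> z" unfolding y_def z_def of_int_diff
    by (rule obtuse_comonotone_inner_nonneg[OF obt])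
       (rule top_indicator_comonotone[OF _ _ ind_def]; simp add: M_def)+
  moreover have "(norm (y + z))\<^sup>2 = (norm y)\<^sup>2 + 2 * (y \<bullet> z) + (norm z)\<^sup>2"
    by (simp add: power2_norm_eq_inner inner_add_left inner_add_right inner_commute)
  ultimately show False using minimal unfolding split by simp
qed

(* The three pair sums cannot all be minimal: their squared norms add up to the energy,
   which is at least 16. *)
lemma not_all_pair_sums_minimal:
  assumes basis: "is_basis3 L v1 v2 v3" and mn: "min_norm L 2"
  shows "\<not> (norm (v1 + v2) = 2 \<and> norm (v1 + v3) = 2 \<and> norm (v2 + v3) = 2)"
proof
  assume pairs: "norm (v1 + v2) = 2 \<and> norm (v1 + v3) = 2 \<and> norm (v2 + v3) = 2"
  have "2 \<le> norm v1" "2 \<le> norm v2" "2 \<le> norm v3" "2 \<le> norm (v1 + v2 + v3)"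
    using basis_comb_norm_ge[OF basis mn, of 1 0 0] basis_comb_norm_ge[OF basis mn, of 0 1 0]
      basis_comb_norm_ge[OF basis mn, of 0 0 1] basis_comb_norm_ge[OF basis mn, of 1 1 1] by simp_all
  then have "4 \<le> (norm v1)\<^sup>2" "4 \<le> (norm v2)\<^sup>2" "4 \<le> (norm v3)\<^sup>2" "4 \<le> (norm (v1 + v2 + v3))\<^sup>2"
    using power_mono[of 2 "norm v1" 2] power_mono[of 2 "norm v2" 2] power_mono[of 2 "norm v3" 2]
      power_mono[of 2 "norm (v1 + v2 + v3)" 2] by simp_all
  moreover have "(norm (v1 + v2))\<^sup>2 + (norm (v1 + v3))\<^sup>2 + (norm (v2 + v3))\<^sup>2
      = (norm v1)\<^sup>2 + (norm v2)\<^sup>2 + (norm v3)\<^sup>2 + (norm (v1 + v2 + v3))\<^sup>2"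
    unfolding power2_norm_eq_inner by (simp add: inner_add_left inner_add_right inner_commute)
  ultimately show False using pairs by simp
qed

lemma obtuse_superbase_swap12: "obtuse_superbase v2 v1 v3 = obtuse_superbase v1 v2 v3"
proof -
  have sum: "v2 + v1 + v3 = v1 + v2 + v3" by (simp add: add_ac)
  show ?thesis unfolding obtuse_superbase_def sum by (auto simp: inner_commute)
qed

lemma obtuse_superbase_swap23: "obtuse_superbase v1 v3 v2 = obtuse_superbase v1 v2 v3"
proof -
  have sum: "v1 + v3 + v2 = v1 + v2 + v3" by (simp add: add_ac)
  show ?thesis unfolding obtuse_superbase_def sum by (auto simp: inner_commute)
qed

lemma good_basis_exists:
  assumes lat: "is_lattice3 L" and mn: "min_norm L 2"
  obtains u1 u2 u3 where "is_basis3 L u1 u2 u3" "obtuse_superbase u1 u2 u3" "norm (u2 + u3) \<noteq> 2"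
proof -
  obtain v1 v2 v3 where red: "selling_reduced L v1 v2 v3" using selling_reduced_exists[OF lat] .
  have b: "is_basis3 L v1 v2 v3" using red unfolding selling_reduced_def by blast
  have obt: "obtuse_superbase v1 v2 v3" by (rule selling_reduced_obtuse[OF red])
  consider "norm (v2 + v3) \<noteq> 2" | "norm (v1 + v3) \<noteq> 2" | "norm (v1 + v2) \<noteq> 2"
    using not_all_pair_sums_minimal[OF b mn] by blast
  then show ?thesis
  proof cases
    case 1
    then show ?thesis using that b obt by blast
  next
    case 2
    then show ?thesis
      using that[OF basis_swap12[OF b]] obt obtuse_superbase_swap12 by blast
  next
    case 3
    then show ?thesis
      using that[OF basis_swap12[OF basis_swap23[OF b]]] obt obtuse_superbase_swap12
        obtuse_superbase_swap23 by (metis add.commute)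
  qed
qed

section \<open>The face-centred cubic lattice\<close>

lemma norm_eq_2_iff: "norm z = 2 \<longleftrightarrow> (norm z)\<^sup>2 = 4"
  using power2_eq_iff_nonneg[of "norm z" 2] by simp

(* A basis of fcc whose Gram matrix matches the contact pattern of a generic obtuse
   superbase: all vectors with coordinates in {0,1}^3 except (0,1,1) are minimal. *)
definition fcc_b1 :: "real^3" where "fcc_b1 = vector [- sqrt 2, 0, sqrt 2]"
definition fcc_b2 :: "real^3" where "fcc_b2 = vector [sqrt 2, sqrt 2, 0]"
definition fcc_b3 :: "real^3" where "fcc_b3 = vector [sqrt 2, - sqrt 2, 0]"

lemma fcc_comb:
  "a *\<^sub>R fcc_b1 + b *\<^sub>R fcc_b2 + c *\<^sub>R fcc_b3
     = (vector [sqrt 2 * (b + c - a), sqrt 2 * (b - c), sqrt 2 * a] :: real^3)"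
  by (simp add: vec_eq_iff forall_3 fcc_b1_def fcc_b2_def fcc_b3_def algebra_simps)

lemma fcc_comb_norm_sq:
  "(norm (of_int a *\<^sub>R fcc_b1 + of_int b *\<^sub>R fcc_b2 + of_int c *\<^sub>R fcc_b3))\<^sup>2
     = 2 * of_int ((b + c - a)\<^sup>2 + (b - c)\<^sup>2 + a\<^sup>2)"
  unfolding fcc_comb by (simp add: norm_vec_def L2_set_def sum_3 power_mult_distrib)

lemma fcc_basis: "is_basis3 fcc fcc_b1 fcc_b2 fcc_b3"
proof -
  have "lin_indep3 fcc_b1 fcc_b2 fcc_b3" unfolding lin_indep3_def
  proof (intro allI impI)
    fix a b c :: real assume "a *\<^sub>R fcc_b1 + b *\<^sub>R fcc_b2 + c *\<^sub>R fcc_b3 = 0"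
    then have "sqrt 2 * (b + c - a) = 0" "sqrt 2 * (b - c) = 0" "sqrt 2 * a = 0"
      unfolding fcc_comb by (simp_all add: vec_eq_iff forall_3)
    then show "a = 0 \<and> b = 0 \<and> c = 0" by simp
  qed
  moreover have "fcc \<subseteq> int_span3 fcc_b1 fcc_b2 fcc_b3"
  proof
    fix x assume "x \<in> fcc"
    then obtain p q r :: int where x: "x = vector [sqrt 2 * of_int p, sqrt 2 * of_int q, sqrt 2 * of_int r]"
      and even: "even (p + q + r)" unfolding fcc_def by blast
    then obtain k where k: "p + q + r = 2 * k" by blast
    have "x = of_int r *\<^sub>R fcc_b1 + of_int k *\<^sub>R fcc_b2 + of_int (k - q) *\<^sub>R fcc_b3"
    proof -
      have "real_of_int k + real_of_int (k - q) - real_of_int r = real_of_int p"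
        using arg_cong[OF k, of real_of_int] by simp
      then show ?thesis unfolding fcc_comb x by simp
    qed
    then show "x \<in> int_span3 fcc_b1 fcc_b2 fcc_b3" by (rule int_span3_memI)
  qed
  moreover have "int_span3 fcc_b1 fcc_b2 fcc_b3 \<subseteq> fcc"
  proof
    fix x assume "x \<in> int_span3 fcc_b1 fcc_b2 fcc_b3"
    then obtain a b c where "x = of_int a *\<^sub>R fcc_b1 + of_int b *\<^sub>R fcc_b2 + of_int c *\<^sub>R fcc_b3"
      by (rule int_span3_E)
    then have "x = vector [sqrt 2 * of_int (b + c - a), sqrt 2 * of_int (b - c), sqrt 2 * of_int a]"
      unfolding fcc_comb by simp
    moreover have "even ((b + c - a) + (b - c) + a)" by simp
    ultimately show "x \<in> fcc" unfolding fcc_def by blast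
  qed
  ultimately show ?thesis unfolding is_basis3_def by blast
qed

lemma even_sum_squares_ge2:
  fixes p q r :: int
  assumes "even (p + q + r)" "\<not> (p = 0 \<and> q = 0 \<and> r = 0)"
  shows "2 \<le> p\<^sup>2 + q\<^sup>2 + r\<^sup>2"
proof (rule ccontr)
  assume small: "\<not> ?thesis"
  then have "p\<^sup>2 \<le> 1" "q\<^sup>2 \<le> 1" "r\<^sup>2 \<le> 1"
    using zero_le_power2[of p] zero_le_power2[of q] zero_le_power2[of r] by linarith+
  then have "p \<in> {-1, 0, 1}" "q \<in> {-1, 0, 1}" "r \<in> {-1, 0, 1}"
    by (auto simp: abs_square_le_1 abs_le_iff)
  then show False using assms small by auto
qed

lemma min_norm_fcc: "min_norm fcc 2"
proof -
  have basis: "fcc = int_span3 fcc_b1 fcc_b2 fcc_b3" using fcc_basis unfolding is_basis3_def by blast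
  have "2 \<le> norm x" if x_in: "x \<in> fcc" and nonzero: "x \<noteq> 0" for x
  proof -
    obtain a b c where x: "x = of_int a *\<^sub>R fcc_b1 + of_int b *\<^sub>R fcc_b2 + of_int c *\<^sub>R fcc_b3"
      using x_in unfolding basis by (rule int_span3_E)
    have "\<not> (b + c - a = 0 \<and> b - c = 0 \<and> a = 0)" using nonzero x by auto
    then have sq: "2 \<le> (b + c - a)\<^sup>2 + (b - c)\<^sup>2 + a\<^sup>2" by (intro even_sum_squares_ge2) auto
    have cast: "4 \<le> 2 * real_of_int s" if "2 \<le> s" for s :: int using that by simp
    have "4 \<le> (norm x)\<^sup>2" unfolding x fcc_comb_norm_sq by (rule cast[OF sq])
    then show ?thesis using power2_le_imp_le[of 2 "norm x"] by simp
  qed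
  moreover have "fcc_b2 \<in> fcc" using basis int_span3_generators by blast
  moreover have "fcc_b2 \<noteq> 0" by (simp add: fcc_b2_def vec_eq_iff forall_3)
  moreover have "norm fcc_b2 = 2"
    using fcc_comb_norm_sq[of 0 1 0] by (simp add: norm_eq_2_iff)
  ultimately show ?thesis unfolding min_norm_def by blast
qed

lemma fcc_comb_minimal:
  fixes a b c :: int
  assumes "max 0 (max a (max b c)) - min 0 (min a (min b c)) \<le> 1"
    and "\<not> (a = 0 \<and> b = 0 \<and> c = 0)" "\<not> (a = 0 \<and> b = 1 \<and> c = 1)" "\<not> (a = 0 \<and> b = -1 \<and> c = -1)"
  shows "norm (of_int a *\<^sub>R fcc_b1 + of_int b *\<^sub>R fcc_b2 + of_int c *\<^sub>R fcc_b3) = 2"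
proof -
  have "a \<in> {-1, 0, 1}" "b \<in> {-1, 0, 1}" "c \<in> {-1, 0, 1}"
    using assms(1) by (auto simp: max_def min_def split: if_splits)
  then have "(b + c - a)\<^sup>2 + (b - c)\<^sup>2 + a\<^sup>2 = 2" using assms by auto
  then show ?thesis unfolding norm_eq_2_iff fcc_comb_norm_sq by simp
qed

section \<open>The transfer map\<close>

definition transfer :: "real^3 \<Rightarrow> real^3 \<Rightarrow> real^3 \<Rightarrow> real^3 \<Rightarrow> real^3 \<Rightarrow> real^3 \<Rightarrow> real^3 \<Rightarrow> real^3" where
  "transfer u1 u2 u3 w1 w2 w3 = coord_map w1 w2 w3 \<circ> inv (coord_map u1 u2 u3)"

lemma transfer_comb:
  assumes "lin_indep3 u1 u2 u3"
  shows "transfer u1 u2 u3 w1 w2 w3 (a *\<^sub>R u1 + b *\<^sub>R u2 + c *\<^sub>R u3) = a *\<^sub>R w1 + b *\<^sub>R w2 + c *\<^sub>R w3"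
  using assms unfolding transfer_def lin_indep3_iff_inj
  by (simp add: coord_map_vector[symmetric])

lemma linear_transfer:
  assumes "lin_indep3 u1 u2 u3"
  shows "linear (transfer u1 u2 u3 w1 w2 w3)"
  using assms unfolding transfer_def lin_indep3_iff_inj
  by (intro linear_compose linear_coord_map inj_linear_imp_inv_linear)

lemma inj_transfer:
  assumes "lin_indep3 u1 u2 u3" "lin_indep3 w1 w2 w3"
  shows "inj (transfer u1 u2 u3 w1 w2 w3)"
  using assms unfolding transfer_def lin_indep3_iff_inj
  by (intro inj_compose surj_imp_inj_inv linear_inj_imp_surj[OF linear_coord_map])

lemma transfer_preserves_contacts:
  assumes basis: "is_basis3 L u1 u2 u3" and mn: "min_norm L 2"
    and obt: "obtuse_superbase u1 u2 u3" and not_minimal: "norm (u2 + u3) \<noteq> 2"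
    and in_L: "x \<in> L" "y \<in> L" and contact: "dist x y = 2"
  shows "dist (transfer u1 u2 u3 fcc_b1 fcc_b2 fcc_b3 x) (transfer u1 u2 u3 fcc_b1 fcc_b2 fcc_b3 y) = 2"
proof -
  let ?f = "transfer u1 u2 u3 fcc_b1 fcc_b2 fcc_b3"
  have L: "L = int_span3 u1 u2 u3" and indep: "lin_indep3 u1 u2 u3"
    using basis unfolding is_basis3_def by auto
  obtain a b c where diff: "x - y = of_int a *\<^sub>R u1 + of_int b *\<^sub>R u2 + of_int c *\<^sub>R u3"
    using int_span3_diff[OF in_L[unfolded L]] by (rule int_span3_E)
  have minimal: "norm (of_int a *\<^sub>R u1 + of_int b *\<^sub>R u2 + of_int c *\<^sub>R u3) = 2"
    using contact unfolding dist_norm diff .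
  have "norm (- u2 - u3) = norm (u2 + u3)" using norm_minus_cancel[of "u2 + u3"] by simp
  then have excluded: "\<not> (a = 0 \<and> b = 0 \<and> c = 0)" "\<not> (a = 0 \<and> b = 1 \<and> c = 1)"
      "\<not> (a = 0 \<and> b = -1 \<and> c = -1)"
    using minimal not_minimal by auto
  have "norm (of_int a *\<^sub>R fcc_b1 + of_int b *\<^sub>R fcc_b2 + of_int c *\<^sub>R fcc_b3) = 2"
    by (rule fcc_comb_minimal[OF minimal_vector_spread[OF basis mn obt minimal] excluded])
  moreover have "?f x - ?f y = of_int a *\<^sub>R fcc_b1 + of_int b *\<^sub>R fcc_b2 + of_int c *\<^sub>R fcc_b3"
    unfolding linear_diff[OF linear_transfer[OF indep], symmetric] diff transfer_comb[OF indep] ..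
  ultimately show ?thesis by (simp add: dist_norm)
qed

section \<open>Comparison of contact numbers\<close>

lemma lattice_separated:
  assumes "is_lattice3 L" "min_norm L 2" "x \<in> L" "y \<in> L" "x \<noteq> y"
  shows "2 \<le> dist x y"
proof -
  obtain v1 v2 v3 where "L = int_span3 v1 v2 v3"
    using assms(1) unfolding is_lattice3_def is_basis3_def by blast
  then have "x - y \<in> L" using int_span3_diff assms(3,4) by blast
  then show ?thesis using assms(2,5) unfolding min_norm_def dist_norm by auto
qed

lemma packing_if_separated:
  assumes "\<And>x y. x \<in> P \<Longrightarrow> y \<in> P \<Longrightarrow> x \<noteq> y \<Longrightarrow> 2 \<le> dist x y"
  shows "unit_packing P"
  unfolding unit_packing_def
proof (intro ballI impI)
  fix x y assume xy: "x \<in> P" "y \<in> P" "x \<noteq> y"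
  show "interior (cball x 1) \<inter> interior (cball y 1) = {}"
  proof (rule ccontr)
    assume "\<not> ?thesis"
    then obtain z where "dist x z < 1" "dist y z < 1" by auto
    then have "dist x y < 2" using dist_triangle[of x y z] by (simp add: dist_commute)
    then show False using assms[OF xy] by simp
  qed
qed

lemma lattice_packings_exist:
  assumes lat: "is_lattice3 L" and mn: "min_norm L 2"
  shows "\<exists>P \<subseteq> L. finite P \<and> card P = n \<and> unit_packing P"
proof -
  obtain v1 v2 v3 where L: "L = int_span3 v1 v2 v3"
    using lat unfolding is_lattice3_def is_basis3_def by blast
  obtain v where v: "v \<in> L" "v \<noteq> 0" using mn unfolding min_norm_def by blast
  define P where "P = (\<lambda>k. of_nat k *\<^sub>R v) ` {..<n}"
  have "inj_on (\<lambda>k. of_nat k *\<^sub>R v) {..<n}" using v(2) by (intro inj_onI) simp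
  then have "card P = n" unfolding P_def by (simp add: card_image)
  moreover have "P \<subseteq> L" unfolding P_def L using v(1) L int_span3_nat_scale by auto
  moreover have "unit_packing P"
    using \<open>P \<subseteq> L\<close> lattice_separated[OF lat mn] by (intro packing_if_separated) auto
  ultimately show ?thesis unfolding P_def by blast
qed

lemma touching_le_pow: "finite P \<Longrightarrow> touching P \<le> 2 ^ card P"
  unfolding touching_def
  by (rule order_trans[OF card_mono[of "Pow P"]]) (auto simp: card_Pow)

lemma touching_mono:
  assumes fin: "finite P" and inj: "inj_on f P"
    and contacts: "\<And>x y. x \<in> P \<Longrightarrow> y \<in> P \<Longrightarrow> dist x y = 2 \<Longrightarrow> dist (f x) (f y) = 2"
  shows "touching P \<le> touching (f ` P)"
proof -
  define A where "A = {{x, y} | x y. x \<in> P \<and> y \<in> P \<and> dist x y = 2}"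
  define B where "B = {{x, y} | x y. x \<in> f ` P \<and> y \<in> f ` P \<and> dist x y = 2}"
  have subsets: "s \<subseteq> P" if "s \<in> A" for s using that unfolding A_def by auto
  have "inj_on (image f) A"
    using inj_on_image_eq_iff[OF inj subsets subsets] by (intro inj_onI) blast
  moreover have "image f ` A \<subseteq> B"
  proof
    fix u assume "u \<in> image f ` A"
    then obtain x y where "x \<in> P" "y \<in> P" "dist x y = 2" "u = {f x, f y}" unfolding A_def by auto
    then show "u \<in> B" unfolding B_def using contacts by blast
  qed
  moreover have "finite B"
    using finite_subset[of B "Pow (f ` P)"] fin unfolding B_def by auto
  ultimately have "card A \<le> card B" by (rule card_inj_on_le)
  then show ?thesis unfolding touching_def A_def B_def .
qed

lemma C_lat_mono:
  assumes packings: "\<exists>P \<subseteq> A. finite P \<and> card P = n \<and> unit_packing P"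
    and inj: "inj_on f A" and image: "f ` A \<subseteq> B"
    and separated: "\<And>x y. x \<in> B \<Longrightarrow> y \<in> B \<Longrightarrow> x \<noteq> y \<Longrightarrow> 2 \<le> dist x y"
    and contacts: "\<And>x y. x \<in> A \<Longrightarrow> y \<in> A \<Longrightarrow> dist x y = 2 \<Longrightarrow> dist (f x) (f y) = 2"
  shows "C_lat A n \<le> C_lat B n"
proof -
  have finite_values: "finite {touching P | P. P \<subseteq> X \<and> finite P \<and> card P = n \<and> unit_packing P}" for X
    by (rule finite_subset[of _ "{..2 ^ n}"]) (auto dest: touching_le_pow)
  let ?SA = "{touching P | P. P \<subseteq> A \<and> finite P \<and> card P = n \<and> unit_packing P}"
  have "Max ?SA \<in> ?SA" using finite_values packings by (intro Max_in) auto
  then obtain P where P: "P \<subseteq> A" "finite P" "card P = n" "C_lat A n = touching P"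
    unfolding C_lat_def by auto
  have injP: "inj_on f P" using inj P(1) inj_on_subset by blast
  have image_P: "f ` P \<subseteq> B" using image P(1) by blast
  then have packing: "unit_packing (f ` P)" by (intro packing_if_separated separated) auto
  have card: "card (f ` P) = n" using card_image[OF injP] P(3) by simp
  have "touching (f ` P) \<le> C_lat B n"
    unfolding C_lat_def using image_P packing card P(2) finite_values by (intro Max_ge) auto
  moreover have "touching P \<le> touching (f ` P)"
    using touching_mono[OF P(2) injP] contacts P(1) by blast
  ultimately show ?thesis using P(4) by simp
qed

theorem mainTheorem9:
  fixes L :: "(real^3) set"
  assumes "is_lattice3 L" and "min_norm L 2"
  shows "(\<forall>n::nat. n \<ge> 1 \<longrightarrow> C_lat L n \<le> C_fcc n) \<and>
         (\<exists>v1 v2 v3 w1 w2 w3 (f :: real^3 \<Rightarrow> real^3).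
            is_basis3 L v1 v2 v3 \<and> is_basis3 fcc w1 w2 w3 \<and>
            (\<forall>a b c :: int. f (of_int a *\<^sub>R v1 + of_int b *\<^sub>R v2 + of_int c *\<^sub>R v3)
                             = of_int a *\<^sub>R w1 + of_int b *\<^sub>R w2 + of_int c *\<^sub>R w3) \<and>
            (\<forall>x\<in>L. \<forall>y\<in>L. dist x y = 2 \<longrightarrow> dist (f x) (f y) = 2))"
proof -
  obtain u1 u2 u3 where basis: "is_basis3 L u1 u2 u3" and obt: "obtuse_superbase u1 u2 u3"
    and not_minimal: "norm (u2 + u3) \<noteq> 2"
    using good_basis_exists[OF assms] by blast
  define f where "f = transfer u1 u2 u3 fcc_b1 fcc_b2 fcc_b3"
  have indep: "lin_indep3 u1 u2 u3" and L: "L = int_span3 u1 u2 u3"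
    and fcc: "lin_indep3 fcc_b1 fcc_b2 fcc_b3" "fcc = int_span3 fcc_b1 fcc_b2 fcc_b3"
    using basis fcc_basis unfolding is_basis3_def by auto
  have coords: "f (of_int a *\<^sub>R u1 + of_int b *\<^sub>R u2 + of_int c *\<^sub>R u3)
      = of_int a *\<^sub>R fcc_b1 + of_int b *\<^sub>R fcc_b2 + of_int c *\<^sub>R fcc_b3" for a b c :: int
    unfolding f_def by (rule transfer_comb[OF indep])
  have contacts: "\<forall>x\<in>L. \<forall>y\<in>L. dist x y = 2 \<longrightarrow> dist (f x) (f y) = 2"
    unfolding f_def using transfer_preserves_contacts[OF basis assms(2) obt not_minimal] by blast
  have image: "f ` L \<subseteq> fcc"
    unfolding L fcc(2) by (auto elim!: int_span3_E intro: int_span3_memI simp: coords)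
  have inj: "inj_on f L"
    using inj_transfer[OF indep fcc(1)] unfolding f_def by (rule inj_on_subset) simp
  have separated: "2 \<le> dist x y" if "x \<in> fcc" "y \<in> fcc" "x \<noteq> y" for x y
    using fcc_basis lattice_separated[OF _ min_norm_fcc that] unfolding is_lattice3_def by blast
  have "C_lat L n \<le> C_fcc n" for n
    using C_lat_mono[OF lattice_packings_exist[OF assms] inj image separated] contacts
    unfolding C_fcc_def by blast
  then show ?thesis using basis fcc_basis coords contacts by blast
qed

end
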